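(* Let $\mathbb{F}$ be the field of order $q$ ($q$ a prime power), and let $S\subset\mathbb{F}^\times$ be such that for all distinct $i,j\in S$ we have $i+j\neq0$ and $ij\neq-1$. For $i\in S$ let $$Z_i=\left[\begin{array}{ccc}1&0&0\\0&1&1\\ i&1&0\\ 0&i^{-1}&i\end{array}\right]$$ (the sudoku flag with datum $\Gamma_i=\begin{pmatrix}i&1\\0&i^{-1}\end{pmatrix}$, $\beta_i=i$). Then each $Z_i$ is a sudoku flag, and if $M_i$ is a sudoku solution generated by $Z_i$ for each $i\in S$, the collection $\{M_i\mid i\in S\}$ is a strongly orthogonal collection of sudoku solutions of order $q^2$ of size $|S|$.
   Context: Locations of a sudoku solution of order $q^2$ are identified with $(x_1,x_2,x_3,x_4)\in\mathbb{F}^4$: $x_1$ large row, $x_2$ row within the large row, $x_3$ large column, $x_4$ column within the large column; rows, columns and subsquares are the sets of locations with fixed $(x_1,x_2)$, $(x_3,x_4)$, $(x_1,x_3)$ respectively. A sudoku solution of order $q^2$ assigns symbols $\{0,\dots,q^2-1\}$ to locations so that each symbol occurs exactly once in every row, column and subsquare; two are orthogonal if upon superimposition each ordered pair of symbols occurs exactly once. Each symbol is $x=b_qq+b_1$ with radix digit $b_q$ and units digit $b_1$ in $\{0,\dots,q-1\}$; fix a bijection $\mathbb{F}\leftrightarrow\{0,\dots,q-1\}$ to record coordinates. A flag is a pair $(g,V)$ of subspaces of $\mathbb{F}^4$ with $\dim g=2$, $\dim V=3$, $g\subset V$; the notation $[v_1\ v_2\ v_3]$ (a $4\times3$ matrix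 with columns $v_1,v_2,v_3$) denotes $g=\langle v_1,v_2\rangle$, $V=\langle v_1,v_2,v_3\rangle$. It is a sudoku flag if every coset of $g$ meets every row, column and subsquare in exactly one location. A sudoku solution generated by a sudoku flag $(g,V)$ is a sudoku solution of order $q^2$ in which each coset of $g$ is exactly the set of locations of one symbol and each coset of $V$ is exactly the set of locations whose symbols have one given radix digit. An ordered orthogonal array $\mathrm{OOA}(4,s,2,v)$ is a $2s\times v^4$ array over an alphabet of size $v$ with rows labeled $(i,j)$, $1\le i\le s$, $j\in\{1,2\}$, such that for every top-justified set $T$ of $4$ rows ($(i,2)\in T\Rightarrow(i,1)\in T$) the subarray on the rows of $T$ contains each $4$-tuple exactly once as a column. For sudoku solutions $M_1,\dots,M_{m}$ of order $q^2$, the associated array is the $2(m+2)\times q^4$ array with one column per location $(x_1,x_2,x_3,x_4)$, with entries $x_1,x_2,x_3,x_4$ in rows $(1,1),(1,2),(2,1),(2,2)$ and the radix and units digits of the symbol of $M_k$ at that location in rows $(k+2,1),(k+2,2)$. A family of $m$ mutually orthogonal sudoku solutions is strongly orthogonal if its associated array is an $\mathrm{OOA}(4,m+2,2,q)$. *)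

theory Defs
  imports Complex_Main "HOL-Library.Product_Plus" "HOL-Library.FuncSet" "HOL-Library.Cardinality"
begin

text \<open>Locations of a sudoku of order q^2 are points (x1,x2,x3,x4) of F^4, F a finite
field with q = CARD('a) elements.\<close>

type_synonym 'a loc = "'a \<times> 'a \<times> 'a \<times> 'a"

definition sc :: "'a::field \<Rightarrow> 'a loc \<Rightarrow> 'a loc" where
  "sc c x = (case x of (a, b, d, e) \<Rightarrow> (c * a, c * b, c * d, c * e))"

definition subsp :: "'a::field loc set \<Rightarrow> bool" where
  "subsp W = module.subspace sc W"

definition spn :: "'a::field loc set \<Rightarrow> 'a loc set" where
  "spn A = module.span sc A"

definition dimen :: "'a::field loc set \<Rightarrow> nat" where
  "dimen W = vector_space.dim sc W"

definition is_flag :: "'a::field loc set \<Rightarrow> 'a loc set \<Rightarrow> bool" where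
  "is_flag g V \<longleftrightarrow> subsp g \<and> subsp V \<and> dimen g = 2 \<and> dimen V = 3 \<and> g \<subseteq> V"

text \<open>The flag denoted by the 4x3 matrix [v1 v2 v3].\<close>
definition flag_mat :: "'a::field loc \<Rightarrow> 'a loc \<Rightarrow> 'a loc \<Rightarrow> 'a loc set \<times> 'a loc set" where
  "flag_mat v1 v2 v3 = (spn {v1, v2}, spn {v1, v2, v3})"

definition coset :: "'a::field loc \<Rightarrow> 'a loc set \<Rightarrow> 'a loc set" where
  "coset p W = (\<lambda>w. p + w) ` W"

text \<open>Rows: fixed (x1,x2); columns: fixed (x3,x4); subsquares: fixed (x1,x3).\<close>
definition rows :: "'a loc set set" where
  "rows = {{x. fst x = a \<and> fst (snd x) = b} | a b. True}"

definition cols :: "'a loc set set" where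
  "cols = {{x. fst (snd (snd x)) = c \<and> snd (snd (snd x)) = d} | c d. True}"

definition boxes :: "'a loc set set" where
  "boxes = {{x. fst x = a \<and> fst (snd (snd x)) = c} | a c. True}"

definition regions :: "'a loc set set" where
  "regions = rows \<union> cols \<union> boxes"

definition sudoku_flag :: "'a::{finite,field} loc set \<times> 'a loc set \<Rightarrow> bool" where
  "sudoku_flag gV \<longleftrightarrow> is_flag (fst gV) (snd gV) \<and>
     (\<forall>p. \<forall>R\<in>regions. card (coset p (fst gV) \<inter> R) = 1)"

definition sudoku :: "('a::{finite,field} loc \<Rightarrow> nat) \<Rightarrow> bool" where
  "sudoku M \<longleftrightarrow> (\<forall>x. M x < (CARD('a))^2) \<and>
     (\<forall>R\<in>regions. \<forall>s. s < (CARD('a))^2 \<longrightarrow> card {x\<in>R. M x = s} = 1)"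

definition generated_by :: "('a::{finite,field} loc \<Rightarrow> nat) \<Rightarrow> 'a loc set \<times> 'a loc set \<Rightarrow> bool" where
  "generated_by M gV \<longleftrightarrow> sudoku M \<and>
     (\<forall>p. \<exists>s. coset p (fst gV) = {x. M x = s}) \<and>
     (\<forall>p. \<exists>d. coset p (snd gV) = {x. M x div CARD('a) = d})"

definition orthogonal :: "('a::{finite,field} loc \<Rightarrow> nat) \<Rightarrow> ('a loc \<Rightarrow> nat) \<Rightarrow> bool" where
  "orthogonal M N \<longleftrightarrow> (\<forall>s t. s < (CARD('a))^2 \<longrightarrow> t < (CARD('a))^2 \<longrightarrow> card {x. M x = s \<and> N x = t} = 1)"

text \<open>Ordered orthogonal array OOA(t,s,2,v): rows labelled (i,j), 1<=i<=s, j in {1,2};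
columns indexed by the finite set C (v^t columns); alphabet {0..<v}.\<close>
definition top_justified :: "(nat \<times> nat) set \<Rightarrow> bool" where
  "top_justified T \<longleftrightarrow> (\<forall>i. (i, 2) \<in> T \<longrightarrow> (i, 1) \<in> T)"

definition ooa :: "nat \<Rightarrow> nat \<Rightarrow> nat \<Rightarrow> 'c set \<Rightarrow> (nat \<times> nat \<Rightarrow> 'c \<Rightarrow> nat) \<Rightarrow> bool" where
  "ooa t s v C A \<longleftrightarrow> finite C \<and> card C = v ^ t \<and>
     (\<forall>r\<in>{1..s} \<times> {1,2}. \<forall>c\<in>C. A r c < v) \<and>
     (\<forall>T. T \<subseteq> {1..s} \<times> {1,2} \<and> card T = t \<and> top_justified T \<longrightarrow>
        bij_betw (\<lambda>c. restrict (\<lambda>r. A r c) T) C (T \<rightarrow>\<^sub>E {0..<v}))"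

text \<open>Associated array of M_1..M_m (Ms k for k = 1..m); enc is the fixed bijection
F -> {0..q-1} used to record coordinates.\<close>
definition assoc_array :: "('a::{finite,field} \<Rightarrow> nat) \<Rightarrow> (nat \<Rightarrow> 'a loc \<Rightarrow> nat) \<Rightarrow> nat \<times> nat \<Rightarrow> 'a loc \<Rightarrow> nat" where
  "assoc_array enc Ms r x = (case x of (x1, x2, x3, x4) \<Rightarrow>
     (if r = (1,1) then enc x1 else if r = (1,2) then enc x2
      else if r = (2,1) then enc x3 else if r = (2,2) then enc x4
      else if snd r = 1 then Ms (fst r - 2) x div CARD('a)
      else Ms (fst r - 2) x mod CARD('a)))"

definition strongly_orthogonal :: "('a::{finite,field} \<Rightarrow> nat) \<Rightarrow> nat \<Rightarrow> (nat \<Rightarrow> 'a loc \<Rightarrow> nat) \<Rightarrow> bool" where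
  "strongly_orthogonal enc m Ms \<longleftrightarrow>
     (\<forall>k\<in>{1..m}. sudoku (Ms k)) \<and>
     (\<forall>k\<in>{1..m}. \<forall>l\<in>{1..m}. k \<noteq> l \<longrightarrow> orthogonal (Ms k) (Ms l)) \<and>
     ooa 4 (m + 2) CARD('a) UNIV (assoc_array enc Ms)"

definition Zflag :: "'a::field \<Rightarrow> 'a loc set \<times> 'a loc set" where
  "Zflag i = flag_mat (1, 0, i, 0) (0, 1, 1, inverse i) (0, 1, 0, i)"

end

theory Submission
  imports Defs "HOL-Computational_Algebra.Polynomial"
begin

text \<open>
  Write $w = (a, b, c, d)$ and $p_w(t) = -c + (a + d) t + (c - b) t^2 - a t^3$. The symbol
  classes of $M_i$ are the cosets of $g_i = \{c = i a + b,\ b = i d\}$, and its radix-digit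
  classes lie in cosets of the hyperplane $V_i = \{p_w(i) = 0\}$. The two coordinate row pairs
  of the associated array fit the same pattern: $\{x_3 = 0\}$ is $\{p_w(0) = 0\}$ and
  $\{x_1 = 0\}$ says that $p_w$ has degree at most two. Two columns agreeing on a
  top-justified set of four rows differ by a vector in the corresponding hyperplanes (one row
  of a pair) and planes (both rows), so the OOA property amounts to these four conditions
  having only the trivial common solution; counting $q^4$ columns gives the bijection. For four
  hyperplanes this holds because a nonzero polynomial of degree at most three has at most
  three roots. The cases involving planes are small linear systems, and
  $i + j \neq 0$, $i j \neq -1$ are exactly what they need. Orthogonality of two solutions
  is the OOA property for their four rows.
\<close>

section \<open>Counting via bijections\<close>

lemma restrict_eq_restrict_iff: "restrict f A = restrict g A \<longleftrightarrow> (\<forall>x\<in>A. f x = g x)"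
  by (metis restrict_apply' restrict_ext)

lemma bij_betw_restrict_PiE_if_inj:
  fixes A :: "'r \<Rightarrow> 'c::finite \<Rightarrow> nat"
  assumes "inj (\<lambda>c. restrict (\<lambda>r. A r c) T)" "finite T"
    and "\<forall>r\<in>T. \<forall>c. A r c < v" "CARD('c) = v ^ card T"
  shows "bij_betw (\<lambda>c. restrict (\<lambda>r. A r c) T) UNIV (T \<rightarrow>\<^sub>E {0..<v})"
proof (rule bij_betw_imageI[OF assms(1)])
  have "range (\<lambda>c. restrict (\<lambda>r. A r c) T) \<subseteq> T \<rightarrow>\<^sub>E {0..<v}"
    using assms(3) by auto
  moreover have "card (range (\<lambda>c. restrict (\<lambda>r. A r c) T)) = card (T \<rightarrow>\<^sub>E {0..<v})"
    using assms(1,2,4) by (simp add: card_image card_PiE)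
  ultimately show "range (\<lambda>c. restrict (\<lambda>r. A r c) T) = T \<rightarrow>\<^sub>E {0..<v}"
    using assms(2) by (simp add: card_subset_eq finite_PiE)
qed

lemma card_fiber_bij_betw:
  assumes "bij_betw f UNIV B" "b \<in> B"
  shows "card {x. f x = b} = 1"
proof -
  obtain x0 where "f x0 = b"
    using assms by (metis bij_betw_imp_surj_on imageE)
  moreover have "f x = b \<Longrightarrow> x = x0" for x
    using assms(1) \<open>f x0 = b\<close> by (auto simp: bij_betw_def dest: injD)
  ultimately have "{x. f x = b} = {x0}"
    by blast
  then show ?thesis
    by simp
qed

section \<open>Linear algebra in $\mathbb{F}^4$\<close>

lemma sc_Pair [simp]: "sc c (a, b, d, e) = (c * a, c * b, c * d, c * e)"
  by (simp add: sc_def)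

lemma zero_loc: "(0 :: 'a::zero loc) = (0, 0, 0, 0)"
  by (simp add: zero_prod_def)

global_interpretation loc: vector_space "sc :: 'a::field \<Rightarrow> 'a loc \<Rightarrow> 'a loc"
  by unfold_locales (auto simp: sc_def algebra_simps split: prod.splits)

lemma spn_pair: "spn {v1, v2} = {sc a v1 + sc b v2 | a b. True}"
proof -
  have "x \<in> spn {v1, v2} \<longleftrightarrow> (\<exists>a b. x = sc a v1 + sc b v2)" for x
  proof -
    have "x \<in> spn {v1, v2} \<longleftrightarrow> (\<exists>a b. x - sc a v1 = sc b v2)"
      unfolding spn_def loc.span_insert loc.span_singleton by auto
    also have "\<dots> \<longleftrightarrow> (\<exists>a b. x = sc a v1 + sc b v2)"
      by (simp add: diff_eq_eq ac_simps)
    finally show ?thesis .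
  qed
  then show ?thesis by blast
qed

lemma spn_triple: "spn {v1, v2, v3} = {sc a v1 + sc b v2 + sc c v3 | a b c. True}"
proof -
  have "x \<in> spn {v1, v2, v3} \<longleftrightarrow> (\<exists>a b c. x = sc a v1 + sc b v2 + sc c v3)" for x
  proof -
    have "x \<in> spn {v1, v2, v3} \<longleftrightarrow> (\<exists>a. x - sc a v1 \<in> spn {v2, v3})"
      unfolding spn_def loc.span_insert[of v1] by auto
    also have "\<dots> \<longleftrightarrow> (\<exists>a b c. x = sc a v1 + sc b v2 + sc c v3)"
      unfolding spn_pair by (simp add: diff_eq_eq ac_simps)
    finally show ?thesis .
  qed
  then show ?thesis by blast
qed

lemma coset_eq: "coset p W = {z. z - p \<in> W}"
  unfolding coset_def by (force simp: image_iff algebra_simps)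

lemma coset_self: "0 \<in> W \<Longrightarrow> p \<in> coset p W"
  by (simp add: coset_eq)

section \<open>The flags $Z_i$\<close>

definition Z_plane :: "'a::field \<Rightarrow> 'a loc set" where
  "Z_plane i = {(a, b, c, d). c = i * a + b \<and> b = i * d}"

text \<open>The hyperplane containing (in fact equal to) the 3-space of $Z_t$, as a cubic in $t$.\<close>

definition Z_hyperplane :: "'a::field \<Rightarrow> 'a loc set" where
  "Z_hyperplane t = {(a, b, c, d). - c + (a + d) * t + (c - b) * t\<^sup>2 - a * t ^ 3 = 0}"

lemma fst_Zflag: "fst (Zflag i) = range (\<lambda>(a, b). (a, b, a * i + b, b * inverse i))"
  by (auto simp: Zflag_def flag_mat_def spn_pair)

lemma snd_Zflag: "snd (Zflag i) = {(a, b + c, a * i + b, b * inverse i + c * i) | a b c. True}"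
  by (simp add: Zflag_def flag_mat_def spn_triple)

lemma fst_Zflag_eq_Z_plane:
  assumes "i \<noteq> 0"
  shows "fst (Zflag i) = Z_plane i"
proof (intro set_eqI iffI)
  fix x assume "x \<in> Z_plane i"
  then obtain a b c d where "x = (a, b, c, d)" "c = i * a + b" "b = i * d"
    unfolding Z_plane_def by blast
  with assms have "x = (\<lambda>(a, b). (a, b, a * i + b, b * inverse i)) (a, b)"
    by (simp add: field_simps)
  then show "x \<in> fst (Zflag i)"
    unfolding fst_Zflag by blast
qed (use assms in \<open>auto simp: fst_Zflag Z_plane_def field_simps\<close>)

lemma snd_Zflag_subset_Z_hyperplane:
  assumes "i \<noteq> 0"
  shows "snd (Zflag i) \<subseteq> Z_hyperplane i"
  using assms by (auto simp: snd_Zflag Z_hyperplane_def field_simps power2_eq_square power3_eq_cube)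

lemma is_flag_Zflag:
  assumes i: "(i::'a::field) \<noteq> 0"
  shows "is_flag (fst (Zflag i)) (snd (Zflag i))"
proof -
  define v1 v2 v3 where "v1 = ((1::'a), (0::'a), i, (0::'a))"
    and "v2 = ((0::'a), (1::'a), (1::'a), inverse i)" and "v3 = ((0::'a), (1::'a), (0::'a), i)"
  have Z: "Zflag i = (spn {v1, v2}, spn {v1, v2, v3})"
    unfolding Zflag_def flag_mat_def v1_def v2_def v3_def ..
  have distinct: "v1 \<noteq> v2" "v1 \<noteq> v3" "v2 \<noteq> v3" "v2 \<noteq> 0"
    unfolding v1_def v2_def v3_def by (auto simp: zero_loc)
  have "v1 \<notin> loc.span {v2}"
    unfolding loc.span_singleton v1_def v2_def by auto
  then have indep12: "loc.independent {v1, v2}"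
    using distinct by (simp add: loc.independent_insert)
  have "v3 \<notin> spn {v1, v2}"
    using fst_Zflag_eq_Z_plane[OF i] Z unfolding v3_def Z_plane_def by auto
  then have indep312: "loc.independent {v3, v1, v2}"
    using indep12 distinct by (simp add: loc.independent_insert spn_def)
  have "dimen (spn {v1, v2}) = 2"
    unfolding dimen_def spn_def using loc.dim_span_eq_card_independent[OF indep12] distinct by simp
  moreover have "dimen (spn {v1, v2, v3}) = 3"
    using loc.dim_span_eq_card_independent[OF indep312] distinct
    by (simp add: dimen_def spn_def insert_commute)
  moreover have "spn {v1, v2} \<subseteq> spn {v1, v2, v3}"
    unfolding spn_def by (rule loc.span_mono) auto
  ultimately show ?thesis
    unfolding is_flag_def Z subsp_def spn_def by simp
qed

lemma card_coset_Zflag_Int_region: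
  assumes i: "(i::'a::{finite,field}) \<noteq> 0" and R: "R \<in> regions"
  shows "card (coset p (fst (Zflag i)) \<inter> R) = 1"
proof -
  obtain p1 p2 p3 p4 where p: "p = (p1, p2, p3, p4)"
    by (cases p) auto
  define \<phi> where "\<phi> = (\<lambda>(a, b). p + (a, b, a * i + b, b * inverse i))"
  have "inj \<phi>"
    by (auto simp: inj_def \<phi>_def)
  have "coset p (fst (Zflag i)) = range \<phi>"
    unfolding coset_def fst_Zflag \<phi>_def image_image by (simp add: case_prod_unfold)
  then have "coset p (fst (Zflag i)) \<inter> R = \<phi> ` {ab. \<phi> ab \<in> R}"
    by auto
  then have card_eq: "card (coset p (fst (Zflag i)) \<inter> R) = card {ab. \<phi> ab \<in> R}"
    using \<open>inj \<phi>\<close> by (simp add: card_image inj_on_subset)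
  from R consider (row) r s where "R = {x. fst x = r \<and> fst (snd x) = s}"
    | (col) r s where "R = {x. fst (snd (snd x)) = r \<and> snd (snd (snd x)) = s}"
    | (box) r s where "R = {x. fst x = r \<and> fst (snd (snd x)) = s}"
    unfolding regions_def rows_def cols_def boxes_def by blast
  then have "\<exists>ab0. {ab. \<phi> ab \<in> R} = {ab0}"
  proof cases
    case row
    then have "{ab. \<phi> ab \<in> R} = {(r - p1, s - p2)}"
      by (auto simp: \<phi>_def p algebra_simps)
    then show ?thesis ..
  next
    case col
    then have "{ab. \<phi> ab \<in> R} = {((r - p3 - i * (s - p4)) / i, i * (s - p4))}"
      using i by (auto simp: \<phi>_def p field_simps)
    then show ?thesis ..
  next
    case box
    then have "{ab. \<phi> ab \<in> R} = {(r - p1, s - p3 - i * (r - p1))}"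
      by (auto simp: \<phi>_def p algebra_simps)
    then show ?thesis ..
  qed
  then show ?thesis
    using card_eq by auto
qed

lemma sudoku_flag_Zflag:
  assumes "(i::'a::{finite,field}) \<noteq> 0"
  shows "sudoku_flag (Zflag i)"
  using assms is_flag_Zflag card_coset_Zflag_Int_region
  unfolding sudoku_flag_def by blast

section \<open>Trivial intersections\<close>

text \<open>
  Each row pair of the associated array gets a label: \<open>Coords12\<close> for the rows recording
  $(x_1, x_2)$, \<open>Coords34\<close> for $(x_3, x_4)$ and \<open>Zlabel i\<close> for a solution generated
  by $Z_i$. Columns agreeing in the first row of a pair differ by a vector of the label's
  \<open>hyperplane\<close>, columns agreeing in both rows by a vector of its \<open>plane\<close>.
\<close>

datatype 'a flag_label = Coords12 | Coords34 | Zlabel 'a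

fun plane :: "'a::field flag_label \<Rightarrow> 'a loc set" where
  "plane Coords12 = {(a, b, c, d). a = 0 \<and> b = 0}"
| "plane Coords34 = {(a, b, c, d). c = 0 \<and> d = 0}"
| "plane (Zlabel i) = Z_plane i"

fun hyperplane :: "'a::field flag_label \<Rightarrow> 'a loc set" where
  "hyperplane Coords12 = {(a, b, c, d). a = 0}"
| "hyperplane Coords34 = {(a, b, c, d). c = 0}"
| "hyperplane (Zlabel i) = Z_hyperplane i"

definition label_in :: "'a set \<Rightarrow> 'a flag_label \<Rightarrow> bool" where
  "label_in S l \<longleftrightarrow> (\<forall>i. l = Zlabel i \<longrightarrow> i \<in> S)"

definition admissible :: "'a::field set \<Rightarrow> bool" where
  "admissible S \<longleftrightarrow> 0 \<notin> S \<and> (\<forall>i\<in>S. \<forall>j\<in>S. i \<noteq> j \<longrightarrow> i + j \<noteq> 0 \<and> i * j \<noteq> - 1)"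

lemma two_flag_labels_cases:
  assumes "card L = 2"
  obtains "L = {Coords12, Coords34}"
  | j where "L = {Coords12, Zlabel j}"
  | j where "L = {Coords34, Zlabel j}"
  | j k where "j \<noteq> k" "L = {Zlabel j, Zlabel k}"
proof -
  obtain l m where "L = {l, m}" "l \<noteq> m"
    using assms by (auto simp: card_2_iff)
  then show ?thesis
    using that by (cases l; cases m) (auto simp: insert_commute)
qed

lemma finite_Zlabels: "finite L \<Longrightarrow> finite {i. Zlabel i \<in> L}"
  using finite_vimageI[of L Zlabel] by (simp add: vimage_def inj_def)

lemma card_flag_labels:
  assumes "finite L"
  shows "card L = of_bool (Coords12 \<in> L) + of_bool (Coords34 \<in> L) + card {i. Zlabel i \<in> L}"
proof -
  have "L = (L \<inter> {Coords12, Coords34}) \<union> Zlabel ` {i. Zlabel i \<in> L}"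
  proof (intro set_eqI iffI)
    fix l assume "l \<in> L"
    then show "l \<in> (L \<inter> {Coords12, Coords34}) \<union> Zlabel ` {i. Zlabel i \<in> L}"
      by (cases l) auto
  qed auto
  then have "card L = card (L \<inter> {Coords12, Coords34}) + card (Zlabel ` {i. Zlabel i \<in> L})"
    using finite_Zlabels assms by (subst card_Un_disjoint[symmetric]) auto
  moreover have "card (L \<inter> {Coords12, Coords34}) = of_bool (Coords12 \<in> L) + of_bool (Coords34 \<in> L)"
    by (cases "Coords12 \<in> L"; cases "Coords34 \<in> L") (auto simp: Int_insert_right)
  ultimately show ?thesis
    by (simp add: card_image inj_on_def)
qed

definition hyperplane_poly :: "'a::field loc \<Rightarrow> 'a poly" where
  "hyperplane_poly w = (case w of (a, b, c, d) \<Rightarrow> [:- c, a + d, c - b, - a:])"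

lemma Z_hyperplane_iff_poly: "w \<in> Z_hyperplane t \<longleftrightarrow> poly (hyperplane_poly w) t = 0"
  by (cases w) (simp add: Z_hyperplane_def hyperplane_poly_def algebra_simps power2_eq_square power3_eq_cube)

lemma hyperplane_Coords34_eq_Z_hyperplane_0: "hyperplane Coords34 = Z_hyperplane 0"
  by (auto simp: Z_hyperplane_def)

lemma degree_hyperplane_poly: "degree (hyperplane_poly w) \<le> 3 - of_bool (w \<in> hyperplane Coords12)"
proof -
  have "degree [:x0, x1, x2, x3:] \<le> 3 - of_bool (x3 = 0)" for x0 x1 x2 x3 :: 'a
    by (cases "x3 = 0") (auto intro: order.trans[OF degree_pCons_le] simp: Suc_le_eq)
  then show ?thesis
    by (cases w) (simp add: hyperplane_poly_def)
qed

lemma hyperplane_poly_eq_0_iff: "hyperplane_poly w = 0 \<longleftrightarrow> w = 0"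
  by (cases w) (auto simp: hyperplane_poly_def zero_loc)

lemma hyperplanes_Int_trivial:
  assumes "0 \<notin> S" and labels: "\<forall>l\<in>L. label_in S l" and "card L = 4"
    and w: "\<forall>l\<in>L. w \<in> hyperplane l"
  shows "w = 0"
proof (rule ccontr)
  define p where "p = hyperplane_poly w"
  define roots where "roots = {i. Zlabel i \<in> L} \<union> (if Coords34 \<in> L then {0} else {})"
  assume "w \<noteq> 0"
  then have "p \<noteq> 0"
    by (simp add: p_def hyperplane_poly_eq_0_iff)
  have "roots \<subseteq> {t. poly p t = 0}"
    using w unfolding roots_def p_def
    by (auto simp: Z_hyperplane_iff_poly[symmetric] hyperplane_Coords34_eq_Z_hyperplane_0
        simp del: hyperplane.simps(2))
  then have "card roots \<le> degree p"
    using card_mono[OF poly_roots_finite[OF \<open>p \<noteq> 0\<close>]] card_poly_roots_bound[OF \<open>p \<noteq> 0\<close>]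
    by (meson order.trans)
  also have "\<dots> \<le> 3 - of_bool (Coords12 \<in> L)"
    using degree_hyperplane_poly[of w] w by (auto simp: p_def)
  also have "\<dots> < card L - of_bool (Coords12 \<in> L)"
    using \<open>card L = 4\<close> by simp
  also have "\<dots> = card roots"
  proof -
    have "finite L"
      using \<open>card L = 4\<close> by (simp add: card_ge_0_finite)
    have "0 \<notin> {i. Zlabel i \<in> L}"
      using labels \<open>0 \<notin> S\<close> by (auto simp: label_in_def)
    then have "card roots = of_bool (Coords34 \<in> L) + card {i. Zlabel i \<in> L}"
      using finite_Zlabels[OF \<open>finite L\<close>] by (simp add: roots_def)
    then show ?thesis
      using card_flag_labels[OF \<open>finite L\<close>] \<open>card L = 4\<close> by simp
  qed
  finally show False
    by simp
qed

text \<open>The roots of a nonzero $\alpha (t^2 - 1) + \beta t$ have product $-1$; this is where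
  $i j \neq -1$ is used, as $i + j \neq 0$ is used for the even quadratic below.\<close>

lemma reciprocal_quadratic_eq_0:
  fixes \<alpha> \<beta> i j :: "'a::field"
  assumes "i \<noteq> j" "i * j \<noteq> - 1"
    and "\<alpha> * (i\<^sup>2 - 1) + \<beta> * i = 0" "\<alpha> * (j\<^sup>2 - 1) + \<beta> * j = 0"
  shows "\<alpha> = 0 \<and> \<beta> = 0"
proof -
  have "\<alpha> * ((i - j) * (i * j + 1)) = j * (\<alpha> * (i\<^sup>2 - 1) + \<beta> * i) - i * (\<alpha> * (j\<^sup>2 - 1) + \<beta> * j)"
    by (simp add: algebra_simps power2_eq_square)
  moreover have "i * j + 1 \<noteq> 0"
    using assms(2) by (simp add: add_eq_0_iff equation_minus_iff)
  ultimately have "\<alpha> = 0"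
    using assms(1,3,4) by simp
  with assms(3,4) have "\<beta> * i = 0" "\<beta> * j = 0"
    by simp_all
  then show ?thesis
    using \<open>\<alpha> = 0\<close> assms(1) by auto
qed

lemma even_quadratic_eq_0:
  fixes \<alpha> \<beta> j k :: "'a::field"
  assumes "j \<noteq> k" "j + k \<noteq> 0" "\<alpha> * j\<^sup>2 = \<beta>" "\<alpha> * k\<^sup>2 = \<beta>"
  shows "\<alpha> = 0 \<and> \<beta> = 0"
proof -
  have "\<alpha> * ((j - k) * (j + k)) = \<alpha> * j\<^sup>2 - \<alpha> * k\<^sup>2"
    by (simp add: algebra_simps power2_eq_square)
  then have "\<alpha> = 0"
    using assms by simp
  then show ?thesis
    using assms(3) by simp
qed

lemma Z_plane_mem_Z_hyperplane_iff:
  assumes "(a, b, c, d) \<in> Z_plane i"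
  shows "(a, b, c, d) \<in> Z_hyperplane t \<longleftrightarrow> (t - i) * (a + d - a * t\<^sup>2) = 0"
proof -
  have "- c + (a + d) * t + (c - b) * t\<^sup>2 - a * t ^ 3 = (t - i) * (a + d - a * t\<^sup>2)"
    using assms by (simp add: Z_plane_def algebra_simps power2_eq_square power3_eq_cube)
  then show ?thesis
    by (simp only: Z_hyperplane_def mem_Collect_eq case_prod_conv)
qed

lemma plane_Coords12_mem_Z_hyperplane_iff:
  "(0, 0, c, d) \<in> Z_hyperplane t \<longleftrightarrow> c * (t\<^sup>2 - 1) + d * t = 0"
proof -
  have "- c + (0 + d) * t + (c - 0) * t\<^sup>2 - 0 * t ^ 3 = c * (t\<^sup>2 - 1) + d * t"
    by (simp add: algebra_simps)
  then show ?thesis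
    by (simp only: Z_hyperplane_def mem_Collect_eq case_prod_conv)
qed

lemma plane_Coords34_mem_Z_hyperplane_iff:
  "(a, b, 0, 0) \<in> Z_hyperplane t \<longleftrightarrow> t * (a * (t\<^sup>2 - 1) + b * t) = 0"
proof -
  have "- 0 + (a + 0) * t + (0 - b) * t\<^sup>2 - a * t ^ 3 = - (t * (a * (t\<^sup>2 - 1) + b * t))"
    by (simp add: algebra_simps power2_eq_square power3_eq_cube)
  then show ?thesis
    by (simp only: Z_hyperplane_def mem_Collect_eq case_prod_conv neg_equal_0_iff_equal)
qed

lemma plane_Coords12_Int_hyperplanes_trivial:
  assumes adm: "admissible S" and H: "\<forall>m\<in>H. label_in S m" "card H = 2" "Coords12 \<notin> H"
    and w: "w \<in> plane Coords12" "\<forall>m\<in>H. w \<in> hyperplane m"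
  shows "w = 0"
proof -
  obtain c d where w_eq: "w = (0, 0, c, d)"
    using w(1) by auto
  have "c = 0 \<and> d = 0"
    using H(2)
  proof (cases rule: two_flag_labels_cases)
    case (3 j)
    then show ?thesis
      using adm H(1) w(2) by (auto simp: w_eq admissible_def label_in_def Z_hyperplane_def)
  next
    case (4 j k)
    then show ?thesis
      using adm H(1) w(2) reciprocal_quadratic_eq_0[of j k c d]
      by (auto simp: w_eq admissible_def label_in_def plane_Coords12_mem_Z_hyperplane_iff)
  qed (use H(3) in auto)
  then show ?thesis
    by (simp add: w_eq zero_loc)
qed

lemma plane_Coords34_Int_hyperplanes_trivial:
  assumes adm: "admissible S" and H: "\<forall>m\<in>H. label_in S m" "card H = 2" "Coords34 \<notin> H"
    and w: "w \<in> plane Coords34" "\<forall>m\<in>H. w \<in> hyperplane m"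
  shows "w = 0"
proof -
  obtain a b where w_eq: "w = (a, b, 0, 0)"
    using w(1) by auto
  have "a = 0 \<and> b = 0"
    using H(2)
  proof (cases rule: two_flag_labels_cases)
    case (2 j)
    then show ?thesis
      using adm H(1) w(2) by (auto simp: w_eq admissible_def label_in_def Z_hyperplane_def)
  next
    case (4 j k)
    then show ?thesis
      using adm H(1) w(2) reciprocal_quadratic_eq_0[of j k a b]
      by (auto simp: w_eq admissible_def label_in_def plane_Coords34_mem_Z_hyperplane_iff)
  qed (use H(3) in auto)
  then show ?thesis
    by (simp add: w_eq zero_loc)
qed

lemma Z_plane_Int_hyperplanes_trivial:
  assumes adm: "admissible S" and "i \<in> S"
    and H: "\<forall>m\<in>H. label_in S m" "card H = 2" "Zlabel i \<notin> H"
    and w: "w \<in> Z_plane i" "\<forall>m\<in>H. w \<in> hyperplane m"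
  shows "w = 0"
proof -
  obtain a b c d where w_eq: "w = (a, b, c, d)"
    by (cases w) auto
  have "i \<noteq> 0"
    using adm \<open>i \<in> S\<close> by (auto simp: admissible_def)
  have "a = 0 \<and> a + d = 0"
    using H(2)
  proof (cases rule: two_flag_labels_cases)
    case 1
    then show ?thesis
      using w \<open>i \<noteq> 0\<close> by (auto simp: w_eq Z_plane_def)
  next
    case (2 j)
    then show ?thesis
      using adm H w by (auto simp: w_eq Z_plane_def Z_hyperplane_def admissible_def label_in_def)
  next
    case (3 j)
    then show ?thesis
      using adm H w \<open>i \<noteq> 0\<close> even_quadratic_eq_0[of j 0 a "a + d"]
      by (auto simp: w_eq Z_plane_mem_Z_hyperplane_iff hyperplane_Coords34_eq_Z_hyperplane_0
          admissible_def label_in_def simp del: hyperplane.simps(2))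
  next
    case (4 j k)
    then show ?thesis
      using adm H w even_quadratic_eq_0[of j k a "a + d"]
      by (auto simp: w_eq Z_plane_mem_Z_hyperplane_iff admissible_def label_in_def)
  qed
  then show ?thesis
    using w(1) by (auto simp: w_eq Z_plane_def zero_loc)
qed

lemma planes_Int_trivial:
  assumes adm: "admissible S" and P: "\<forall>l\<in>P. label_in S l" "card P = 2"
    and w: "\<forall>l\<in>P. w \<in> plane l"
  shows "w = 0"
proof -
  obtain a b c d where w_eq: "w = (a, b, c, d)"
    by (cases w) auto
  have nonzero: "j \<noteq> 0" if "Zlabel j \<in> P" for j
    using adm P(1) that by (auto simp: admissible_def label_in_def)
  from P(2) have "a = 0 \<and> b = 0 \<and> c = 0 \<and> d = 0"
  proof (cases rule: two_flag_labels_cases)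
    case (4 j k)
    then have "(j - k) * a = 0" "(j - k) * d = 0"
      using w by (auto simp: w_eq Z_plane_def algebra_simps)
    then show ?thesis
      using w 4 by (auto simp: w_eq Z_plane_def)
  qed (use w nonzero in \<open>auto simp: w_eq Z_plane_def\<close>)
  then show ?thesis
    by (simp add: w_eq zero_loc)
qed

lemma plane_Int_hyperplanes_trivial:
  assumes adm: "admissible S" and "label_in S l"
    and H: "\<forall>m\<in>H. label_in S m" "card H = 2" "l \<notin> H"
    and w: "w \<in> plane l" "\<forall>m\<in>H. w \<in> hyperplane m"
  shows "w = 0"
proof (cases l)
  case Coords12
  then show ?thesis
    using plane_Coords12_Int_hyperplanes_trivial[OF adm H(1,2)] H(3) w by simp
next
  case Coords34
  then show ?thesis
    using plane_Coords34_Int_hyperplanes_trivial[OF adm H(1,2)] H(3) w by simp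
next
  case (Zlabel i)
  then show ?thesis
    using Z_plane_Int_hyperplanes_trivial[OF adm _ H(1,2)] \<open>label_in S l\<close> H(3) w
    by (simp add: label_in_def)
qed

lemma planes_hyperplanes_Int_trivial:
  assumes adm: "admissible S" and "finite H" "finite P" "H \<inter> P = {}"
    and labels: "\<forall>l\<in>H \<union> P. label_in S l" and card: "card H + 2 * card P = 4"
    and w: "\<forall>l\<in>H. w \<in> hyperplane l" "\<forall>l\<in>P. w \<in> plane l"
  shows "w = 0"
proof -
  consider "card P = 0" | "card P = 1" | "card P = 2"
    using card by linarith
  then show ?thesis
  proof cases
    case 1
    then show ?thesis
      using hyperplanes_Int_trivial[of S H] adm labels card w(1)
      by (simp add: admissible_def)
  next
    case 2
    then obtain l where "P = {l}"
      by (rule card_1_singletonE)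
    then show ?thesis
      using plane_Int_hyperplanes_trivial[OF adm, of l H] \<open>H \<inter> P = {}\<close> labels card w 2
      by auto
  next
    case 3
    then show ?thesis
      using planes_Int_trivial[OF adm, of P] labels w(2) by simp
  qed
qed

lemma top_justified_Int_trivial:
  assumes adm: "admissible S"
    and T: "T \<subseteq> {1..s} \<times> {1, 2}" "card T = 4" "top_justified T"
    and \<gamma>: "inj_on \<gamma> {1..s}" "\<forall>k\<in>{1..s}. label_in S (\<gamma> k)"
    and w: "\<forall>k. (k, 1) \<in> T \<longrightarrow> w \<in> hyperplane (\<gamma> k)" "\<forall>k. (k, 2) \<in> T \<longrightarrow> w \<in> plane (\<gamma> k)"
  shows "w = 0"
proof -
  define K1 where "K1 = {k. (k, 1) \<in> T \<and> (k, 2) \<notin> T}"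
  define K2 where "K2 = {k. (k, 2) \<in> T}"
  have K: "K1 \<subseteq> {1..s}" "K2 \<subseteq> {1..s}"
    using T(1) by (auto simp: K1_def K2_def)
  then have fin: "finite K1" "finite K2"
    by (auto intro: finite_subset)
  have T_eq: "T = K1 \<times> {1} \<union> K2 \<times> {1, 2}"
    using T(1,3) by (auto simp: K1_def K2_def top_justified_def)
  have "card T = card (K1 \<times> {1::nat}) + card (K2 \<times> {1::nat, 2})"
    unfolding T_eq by (rule card_Un_disjoint) (use fin in \<open>simp_all, force simp: K1_def K2_def\<close>)
  then have "card T = card K1 + 2 * card K2"
    by (simp add: card_cartesian_product)
  moreover have "card (\<gamma> ` K1) = card K1" "card (\<gamma> ` K2) = card K2"
    using K inj_on_subset[OF \<gamma>(1)] by (simp_all add: card_image)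
  ultimately have card: "card (\<gamma> ` K1) + 2 * card (\<gamma> ` K2) = 4"
    using T(2) by simp
  have disjoint: "\<gamma> ` K1 \<inter> \<gamma> ` K2 = {}"
    using K \<gamma>(1) unfolding K1_def K2_def by (force dest: inj_onD)
  have labels: "\<forall>l\<in>\<gamma> ` K1 \<union> \<gamma> ` K2. label_in S l"
    using K \<gamma>(2) by blast
  have "\<forall>l\<in>\<gamma> ` K1. w \<in> hyperplane l" "\<forall>l\<in>\<gamma> ` K2. w \<in> plane l"
    using w by (auto simp: K1_def K2_def)
  then show ?thesis
    using planes_hyperplanes_Int_trivial[OF adm _ _ disjoint labels card] fin by simp
qed

section \<open>The associated array\<close>

lemma generated_by_Zflag_eq_iff:
  fixes N :: "'a::{finite,field} loc \<Rightarrow> nat"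
  assumes "generated_by N (Zflag i)" "i \<noteq> 0"
  shows "N y = N x \<longleftrightarrow> y - x \<in> Z_plane i"
proof -
  obtain s where s: "coset x (fst (Zflag i)) = {z. N z = s}"
    using assms(1) unfolding generated_by_def by blast
  have "0 \<in> fst (Zflag i)"
    using assms(2) by (simp add: fst_Zflag_eq_Z_plane Z_plane_def zero_loc)
  then have "N x = s"
    using s coset_self by blast
  then show ?thesis
    using s by (auto simp: coset_eq fst_Zflag_eq_Z_plane[OF assms(2)])
qed

lemma generated_by_Zflag_radix_eq:
  fixes N :: "'a::{finite,field} loc \<Rightarrow> nat"
  assumes "generated_by N (Zflag i)" "i \<noteq> 0" "N y div CARD('a) = N x div CARD('a)"
  shows "y - x \<in> Z_hyperplane i"
proof -
  obtain r where r: "coset x (snd (Zflag i)) = {z. N z div CARD('a) = r}"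
    using assms(1) unfolding generated_by_def by blast
  have "0 \<in> snd (Zflag i)"
    by (simp add: Zflag_def flag_mat_def spn_def loc.span_zero)
  then have "N x div CARD('a) = r"
    using r coset_self by blast
  then have "y - x \<in> snd (Zflag i)"
    using r assms(3) by (auto simp: coset_eq)
  then show ?thesis
    using snd_Zflag_subset_Z_hyperplane[OF assms(2)] by blast
qed

lemma generated_by_Zflag_unique:
  fixes N :: "'a::{finite,field} loc \<Rightarrow> nat"
  assumes "generated_by N (Zflag i)" "generated_by N (Zflag j)" "i \<noteq> 0" "j \<noteq> 0"
  shows "i = j"
proof -
  have "(1, 0, i, 0) \<in> Z_plane i"
    by (simp add: Z_plane_def)
  then have "(1, 0, i, 0) \<in> Z_plane j"
    using generated_by_Zflag_eq_iff[OF assms(1,3), of _ 0]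
      generated_by_Zflag_eq_iff[OF assms(2,4), of _ 0] by simp
  then show ?thesis
    by (simp add: Z_plane_def)
qed

lemma assoc_array_coords [simp]:
  "assoc_array enc Ms (1, 1) (x1, x2, x3, x4) = enc x1"
  "assoc_array enc Ms (1, 2) (x1, x2, x3, x4) = enc x2"
  "assoc_array enc Ms (2, 1) (x1, x2, x3, x4) = enc x3"
  "assoc_array enc Ms (2, 2) (x1, x2, x3, x4) = enc x4"
  by (simp_all add: assoc_array_def)

lemma assoc_array_digits:
  fixes Ms :: "nat \<Rightarrow> 'a::{finite,field} loc \<Rightarrow> nat"
  assumes "k \<ge> 3"
  shows "assoc_array enc Ms (k, 1) x = Ms (k - 2) x div CARD('a)"
    and "assoc_array enc Ms (k, 2) x = Ms (k - 2) x mod CARD('a)"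
  using assms by (auto simp: assoc_array_def split: prod.splits)

definition array_label :: "(nat \<Rightarrow> 'a) \<Rightarrow> nat \<Rightarrow> 'a flag_label" where
  "array_label z k = (if k = 1 then Coords12 else if k = 2 then Coords34 else Zlabel (z (k - 2)))"

lemma assoc_array_eq_imp_hyperplane:
  fixes Ms :: "nat \<Rightarrow> 'a::{finite,field} loc \<Rightarrow> nat"
  assumes "inj enc" and k: "k \<in> {1..m + 2}"
    and gen: "\<forall>k\<in>{1..m}. z k \<noteq> 0 \<and> generated_by (Ms k) (Zflag (z k))"
    and eq: "assoc_array enc Ms (k, 1) x = assoc_array enc Ms (k, 1) y"
  shows "y - x \<in> hyperplane (array_label z k)"
proof -
  obtain x1 x2 x3 x4 y1 y2 y3 y4 where xy: "x = (x1, x2, x3, x4)" "y = (y1, y2, y3, y4)"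
    by (cases x; cases y) auto
  consider "k = 1" | "k = 2" | "k \<ge> 3"
    using k by fastforce
  then show ?thesis
  proof cases
    case 3
    then have "Ms (k - 2) y div CARD('a) = Ms (k - 2) x div CARD('a)"
      using eq assoc_array_digits(1)[OF 3] by metis
    moreover have "k - 2 \<in> {1..m}"
      using k 3 by auto
    then have "z (k - 2) \<noteq> 0" "generated_by (Ms (k - 2)) (Zflag (z (k - 2)))"
      using gen by blast+
    ultimately show ?thesis
      using generated_by_Zflag_radix_eq 3 by (simp add: array_label_def)
  next
    case 1
    then have "enc x1 = enc y1"
      using eq unfolding xy by (simp only: assoc_array_coords)
    then show ?thesis
      using 1 \<open>inj enc\<close> by (auto simp: xy array_label_def dest: injD)
  next
    case 2
    then have "enc x3 = enc y3"
      using eq unfolding xy by (simp only: assoc_array_coords)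
    then show ?thesis
      using 2 \<open>inj enc\<close> by (auto simp: xy array_label_def dest: injD)
  qed
qed

lemma assoc_array_eq_imp_plane:
  fixes Ms :: "nat \<Rightarrow> 'a::{finite,field} loc \<Rightarrow> nat"
  assumes "inj enc" and k: "k \<in> {1..m + 2}"
    and gen: "\<forall>k\<in>{1..m}. z k \<noteq> 0 \<and> generated_by (Ms k) (Zflag (z k))"
    and eq: "assoc_array enc Ms (k, 1) x = assoc_array enc Ms (k, 1) y"
      "assoc_array enc Ms (k, 2) x = assoc_array enc Ms (k, 2) y"
  shows "y - x \<in> plane (array_label z k)"
proof -
  obtain x1 x2 x3 x4 y1 y2 y3 y4 where xy: "x = (x1, x2, x3, x4)" "y = (y1, y2, y3, y4)"
    by (cases x; cases y) auto
  consider "k = 1" | "k = 2" | "k \<ge> 3"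
    using k by fastforce
  then show ?thesis
  proof cases
    case 3
    then have "Ms (k - 2) y = Ms (k - 2) x"
      using eq assoc_array_digits[OF 3] by (metis div_mult_mod_eq)
    moreover have "k - 2 \<in> {1..m}"
      using k 3 by auto
    then have "z (k - 2) \<noteq> 0" "generated_by (Ms (k - 2)) (Zflag (z (k - 2)))"
      using gen by blast+
    ultimately show ?thesis
      using generated_by_Zflag_eq_iff[of "Ms (k - 2)" "z (k - 2)" y x] 3
      by (simp add: array_label_def)
  next
    case 1
    then have "enc x1 = enc y1" "enc x2 = enc y2"
      using eq unfolding xy by (simp_all only: assoc_array_coords)
    then show ?thesis
      using 1 \<open>inj enc\<close> by (auto simp: xy array_label_def dest: injD)
  next
    case 2
    then have "enc x3 = enc y3" "enc x4 = enc y4"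
      using eq unfolding xy by (simp_all only: assoc_array_coords)
    then show ?thesis
      using 2 \<open>inj enc\<close> by (auto simp: xy array_label_def dest: injD)
  qed
qed

lemma inj_on_array_label:
  assumes "inj_on z {1..m}"
  shows "inj_on (array_label z) {1..m + 2}"
proof (rule inj_onI)
  fix k l assume kl: "k \<in> {1..m + 2}" "l \<in> {1..m + 2}" "array_label z k = array_label z l"
  show "k = l"
  proof (cases "k \<ge> 3 \<and> l \<ge> 3")
    case True
    then have "z (k - 2) = z (l - 2)" "k - 2 \<in> {1..m}" "l - 2 \<in> {1..m}"
      using kl by (auto simp: array_label_def)
    then have "k - 2 = l - 2"
      using assms by (auto dest: inj_onD)
    then show ?thesis
      using True by linarith
  next
    case False
    then show ?thesis
      using kl by (auto simp: array_label_def split: if_splits)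
  qed
qed

lemma label_in_array_label:
  assumes "z ` {1..m} \<subseteq> S" "k \<in> {1..m + 2}"
  shows "label_in S (array_label z k)"
  using assms by (force simp: label_in_def array_label_def)

lemma assoc_array_less:
  fixes Ms :: "nat \<Rightarrow> 'a::{finite,field} loc \<Rightarrow> nat"
  assumes enc: "bij_betw enc UNIV {0..<CARD('a)}" and sudoku: "\<forall>k\<in>{1..m}. sudoku (Ms k)"
    and r: "r \<in> {1..m + 2} \<times> {1, 2}"
  shows "assoc_array enc Ms r x < CARD('a)"
proof -
  obtain k j where r_eq: "r = (k, j)"
    by (cases r)
  obtain x1 x2 x3 x4 where x: "x = (x1, x2, x3, x4)"
    by (cases x) auto
  have enc_less: "enc u < CARD('a)" for u
    using bij_betw_apply[OF enc] by simp
  consider "k = 1" | "k = 2" | "k \<ge> 3"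
    using r r_eq by fastforce
  then show ?thesis
  proof cases
    case 3
    then have "k - 2 \<in> {1..m}"
      using r r_eq by auto
    then have "sudoku (Ms (k - 2))"
      using sudoku by blast
    then have "Ms (k - 2) x < CARD('a) * CARD('a)"
      unfolding sudoku_def power2_eq_square by blast
    then show ?thesis
      using r r_eq assoc_array_digits[OF 3, of enc Ms x] by (auto simp: less_mult_imp_div_less)
  qed (use r r_eq enc_less in \<open>auto simp: x assoc_array_def\<close>)
qed

lemma inj_restrict_assoc_array:
  fixes Ms :: "nat \<Rightarrow> 'a::{finite,field} loc \<Rightarrow> nat"
  assumes adm: "admissible S" and "inj enc"
    and z: "inj_on z {1..m}" "z ` {1..m} \<subseteq> S"
    and gen: "\<forall>k\<in>{1..m}. generated_by (Ms k) (Zflag (z k))"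
    and T: "T \<subseteq> {1..m + 2} \<times> {1, 2}" "card T = 4" "top_justified T"
  shows "inj (\<lambda>x. restrict (\<lambda>r. assoc_array enc Ms r x) T)"
proof (rule injI)
  have gen': "\<forall>k\<in>{1..m}. z k \<noteq> 0 \<and> generated_by (Ms k) (Zflag (z k))"
    using adm z(2) gen by (auto simp: admissible_def)
  fix x y assume "restrict (\<lambda>r. assoc_array enc Ms r x) T = restrict (\<lambda>r. assoc_array enc Ms r y) T"
  then have eq: "\<forall>r\<in>T. assoc_array enc Ms r x = assoc_array enc Ms r y"
    by (simp add: restrict_eq_restrict_iff)
  have "y - x = 0"
  proof (rule top_justified_Int_trivial[OF adm T inj_on_array_label[OF z(1)]])
    show "\<forall>k\<in>{1..m + 2}. label_in S (array_label z k)"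
      using label_in_array_label[OF z(2)] by blast
    show "\<forall>k. (k, 1) \<in> T \<longrightarrow> y - x \<in> hyperplane (array_label z k)"
      using T(1) eq assoc_array_eq_imp_hyperplane[OF \<open>inj enc\<close> _ gen'] by blast
    show "\<forall>k. (k, 2) \<in> T \<longrightarrow> y - x \<in> plane (array_label z k)"
      using T(1,3) eq assoc_array_eq_imp_plane[OF \<open>inj enc\<close> _ gen']
      unfolding top_justified_def by blast
  qed
  then show "x = y"
    by simp
qed

lemma ooa_assoc_array:
  fixes Ms :: "nat \<Rightarrow> 'a::{finite,field} loc \<Rightarrow> nat"
  assumes adm: "admissible S" and enc: "bij_betw enc UNIV {0..<CARD('a)}"
    and z: "inj_on z {1..m}" "z ` {1..m} \<subseteq> S"
    and gen: "\<forall>k\<in>{1..m}. generated_by (Ms k) (Zflag (z k))"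
  shows "ooa 4 (m + 2) CARD('a) UNIV (assoc_array enc Ms)"
proof -
  have "inj enc"
    using enc by (simp add: bij_betw_def)
  have "\<forall>k\<in>{1..m}. sudoku (Ms k)"
    using gen by (simp add: generated_by_def)
  then have less: "\<forall>r\<in>{1..m + 2} \<times> {1, 2}. \<forall>x. assoc_array enc Ms r x < CARD('a)"
    using assoc_array_less[OF enc] by blast
  have "bij_betw (\<lambda>x. restrict (\<lambda>r. assoc_array enc Ms r x) T) UNIV (T \<rightarrow>\<^sub>E {0..<CARD('a)})"
    if T: "T \<subseteq> {1..m + 2} \<times> {1, 2}" "card T = 4" "top_justified T" for T
  proof (rule bij_betw_restrict_PiE_if_inj)
    show "inj (\<lambda>x. restrict (\<lambda>r. assoc_array enc Ms r x) T)"
      by (rule inj_restrict_assoc_array[OF adm \<open>inj enc\<close> z gen T])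
    show "finite T"
      using T(1) finite_subset by blast
    show "\<forall>r\<in>T. \<forall>x. assoc_array enc Ms r x < CARD('a)"
      using T(1) less by blast
    show "CARD('a loc) = CARD('a) ^ card T"
      using T(2) by (simp add: card_UNIV_def[symmetric] eval_nat_numeral)
  qed
  then show ?thesis
    using less by (simp add: ooa_def card_UNIV_def[symmetric] eval_nat_numeral)
qed

lemma ooa_assoc_array_imp_orthogonal:
  fixes Ms :: "nat \<Rightarrow> 'a::{finite,field} loc \<Rightarrow> nat"
  assumes ooa: "ooa 4 (m + 2) CARD('a) UNIV (assoc_array enc Ms)"
    and kl: "k \<in> {1..m}" "l \<in> {1..m}" "k \<noteq> l"
  shows "orthogonal (Ms k) (Ms l)"
  unfolding orthogonal_def
proof (intro allI impI)
  define q where "q = CARD('a)"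
  define T where "T = {(k + 2, 1::nat), (k + 2, 2), (l + 2, 1), (l + 2, 2)}"
  define A where "A = assoc_array enc Ms"
  fix s t assume st: "s < CARD('a)\<^sup>2" "t < CARD('a)\<^sup>2"
  have "T \<subseteq> {1..m + 2} \<times> {1, 2}" "card T = 4" "top_justified T"
    using kl by (auto simp: T_def top_justified_def)
  then have bij: "bij_betw (\<lambda>x. restrict (\<lambda>r. A r x) T) UNIV (T \<rightarrow>\<^sub>E {0..<q})"
    using ooa by (simp add: ooa_def A_def q_def)
  define F where "F = restrict (\<lambda>r. if r = (k + 2, 1) then s div q else if r = (k + 2, 2) then s mod q
      else if r = (l + 2, 1) then t div q else t mod q) T"
  have "s div q < q" "t div q < q"
    using st by (simp_all add: q_def power2_eq_square less_mult_imp_div_less)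
  then have "F \<in> T \<rightarrow>\<^sub>E {0..<q}"
    by (auto simp: F_def q_def)
  moreover have fiber: "restrict (\<lambda>r. A r x) T = F \<longleftrightarrow> Ms k x = s \<and> Ms l x = t" for x
  proof -
    have digits: "A (j + 2, 1) x = Ms j x div q" "A (j + 2, 2) x = Ms j x mod q" if "j \<ge> 1" for j
      using that assoc_array_digits[of "j + 2" enc Ms x] by (simp_all add: A_def q_def)
    have "restrict (\<lambda>r. A r x) T = F \<longleftrightarrow>
        Ms k x div q = s div q \<and> Ms k x mod q = s mod q \<and> Ms l x div q = t div q \<and> Ms l x mod q = t mod q"
      using kl digits[of k] digits[of l] by (simp add: F_def T_def restrict_eq_restrict_iff)
    also have "\<dots> \<longleftrightarrow> Ms k x = s \<and> Ms l x = t"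
      by (metis div_mult_mod_eq)
    finally show ?thesis .
  qed
  ultimately show "card {x. Ms k x = s \<and> Ms l x = t} = 1"
    using card_fiber_bij_betw[OF bij, of F] by (simp only: fiber)
qed

theorem theorem5p4:
  fixes S :: "'a::{finite,field} set"
    and enc :: "'a \<Rightarrow> nat"
  assumes enc: "bij_betw enc UNIV {0..<CARD('a)}"
    and S0: "0 \<notin> S"
    and Ssum: "\<forall>i\<in>S. \<forall>j\<in>S. i \<noteq> j \<longrightarrow> i + j \<noteq> 0"
    and Sprod: "\<forall>i\<in>S. \<forall>j\<in>S. i \<noteq> j \<longrightarrow> i * j \<noteq> - 1"
  shows "(\<forall>i\<in>S. sudoku_flag (Zflag i)) \<and>
    (\<forall>M :: 'a \<Rightarrow> 'a loc \<Rightarrow> nat. (\<forall>i\<in>S. generated_by (M i) (Zflag i)) \<longrightarrow>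
       inj_on M S \<and>
       (\<forall>e. bij_betw e {1..card S} S \<longrightarrow> strongly_orthogonal enc (card S) (\<lambda>k. M (e k))))"
proof (intro conjI ballI allI impI)
  show "sudoku_flag (Zflag i)" if "i \<in> S" for i
    using that S0 by (intro sudoku_flag_Zflag) auto
  have adm: "admissible S"
    using S0 Ssum Sprod by (simp add: admissible_def)
  fix M :: "'a \<Rightarrow> 'a loc \<Rightarrow> nat"
  assume gen: "\<forall>i\<in>S. generated_by (M i) (Zflag i)"
  show "inj_on M S"
  proof (rule inj_onI)
    fix i j assume "i \<in> S" "j \<in> S" "M i = M j"
    then show "i = j"
      using gen S0 generated_by_Zflag_unique[of "M i" i j] by fastforce
  qed
  fix e assume e: "bij_betw e {1..card S} S"
  then have gen_e: "\<forall>k\<in>{1..card S}. generated_by (M (e k)) (Zflag (e k))"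
    using gen by (simp add: bij_betw_apply)
  have "ooa 4 (card S + 2) CARD('a) UNIV (assoc_array enc (\<lambda>k. M (e k)))"
    using ooa_assoc_array[OF adm enc bij_betw_imp_inj_on[OF e] _ gen_e] e
    by (simp add: bij_betw_def)
  then show "strongly_orthogonal enc (card S) (\<lambda>k. M (e k))"
    using gen_e ooa_assoc_array_imp_orthogonal
    unfolding strongly_orthogonal_def generated_by_def by blast
qed

end
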